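(* Let $T$ be a complete first-order theory, and let $T'$ be its continuous logic counterpart (i.e., $T$ and $T'$ have the same models, first-order formulas being regarded as $\{0,1\}$-valued continuous formulas). Let $\mathcal{I}$ be a structure in a first-order language $\mathcal{L}'$. Then $\mathcal{I}$-indexed indiscernibles have the continuous modeling property in $T'$ if and only if $\mathcal{I}$-indexed indiscernibles have the (classical) modeling property in $T$.
   Context: Let $\mathcal{L}'$ be a first-order language and $\mathcal{I}$ an $\mathcal{L}'$-structure. Work in a monster model $\mathfrak{C}$ (a $\kappa$-saturated, strongly $\kappa$-homogeneous model for a strong limit cardinal $\kappa > |T|$). An $\mathcal{I}$-indexed sequence $(b_i)_{i\in\mathcal{I}}$ is $\mathcal{I}$-indiscernible if for all finite tuples $\bar i,\bar j$ from $\mathcal{I}$, $\mathrm{qftp}(\bar i)=\mathrm{qftp}(\bar j)$ implies $\mathrm{tp}(b_{\bar i})=\mathrm{tp}(b_{\bar j})$. Given an $\mathcal{I}$-indexed sequence $\mathbf{I}=(a_i)_{i\in\mathcal{I}}$, a sequence $(b_j)_{j\in\mathcal{I}}$ is locally based on $\mathbf{I}$ in the continuous sense if for every finite set $\Delta$ of formulas, every finite tuple $\bar j\subseteq\mathcal{I}$ and every $\varepsilon>0$ there is $\bar i\subseteq\mathcal{I}$ with $\mathrm{qftp}(\bar i)=\mathrm{qftp}(\bar j)$ and $|\varphi(b_{\bar j})-\varphi(a_{\bar i})|\le\varepsilon$ for all $\varphi\in\Delta$; it is locally based on $\mathbf{I}$ in the classical sense if instead one requires $\mathrm{tp}^{\Delta}(b_{\bar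 j})=\mathrm{tp}^{\Delta}(a_{\bar i})$. $\mathcal{I}$-indexed indiscernibles have the continuous modeling property in a continuous theory if for every $\mathcal{I}$-indexed sequence $\mathbf{I}$ in the monster model there is an $\mathcal{I}$-indiscernible sequence locally based on $\mathbf{I}$ in the continuous sense; they have the (classical) modeling property in a first-order theory if the same holds with "locally based" in the classical sense. *)

theory Defs
  imports "HOL-Analysis.Analysis"
begin

text \<open>Languages are given by a type of function symbols (constants are 0-ary function
symbols) and a type of relation symbols; a structure interprets each symbol on argument
lists of every length (equivalently, a symbol of each arity).\<close>

datatype 'f trm = Var nat | Fn 'f "'f trm list"

datatype ('f, 'r) fm =
    FBot
  | FEq "'f trm" "'f trm"
  | FRel 'r "'f trm list"
  | FNeg "('f, 'r) fm"
  | FConj "('f, 'r) fm" "('f, 'r) fm"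
  | FEx nat "('f, 'r) fm"

record ('a, 'f, 'r) struc =
  sdom :: "'a set"
  sfun :: "'f \<Rightarrow> 'a list \<Rightarrow> 'a"
  srel :: "'r \<Rightarrow> 'a list \<Rightarrow> bool"

definition is_struc :: "('a, 'f, 'r) struc \<Rightarrow> bool" where
  "is_struc M \<longleftrightarrow> sdom M \<noteq> {} \<and>
     (\<forall>f as. set as \<subseteq> sdom M \<longrightarrow> sfun M f as \<in> sdom M)"

fun teval :: "('a, 'f, 'r) struc \<Rightarrow> (nat \<Rightarrow> 'a) \<Rightarrow> 'f trm \<Rightarrow> 'a" where
  "teval M s (Var n) = s n"
| "teval M s (Fn f ts) = sfun M f (map (teval M s) ts)"

fun sat :: "('a, 'f, 'r) struc \<Rightarrow> (nat \<Rightarrow> 'a) \<Rightarrow> ('f, 'r) fm \<Rightarrow> bool" where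
  "sat M s FBot = False"
| "sat M s (FEq t u) = (teval M s t = teval M s u)"
| "sat M s (FRel r ts) = srel M r (map (teval M s) ts)"
| "sat M s (FNeg \<phi>) = (\<not> sat M s \<phi>)"
| "sat M s (FConj \<phi> \<psi>) = (sat M s \<phi> \<and> sat M s \<psi>)"
| "sat M s (FEx x \<phi>) = (\<exists>a\<in>sdom M. sat M (s(x := a)) \<phi>)"

fun tvars :: "'f trm \<Rightarrow> nat set" where
  "tvars (Var n) = {n}"
| "tvars (Fn f ts) = (\<Union>t\<in>set ts. tvars t)"

fun fv :: "('f, 'r) fm \<Rightarrow> nat set" where
  "fv FBot = {}"
| "fv (FEq t u) = tvars t \<union> tvars u"
| "fv (FRel r ts) = (\<Union>t\<in>set ts. tvars t)"
| "fv (FNeg \<phi>) = fv \<phi>"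
| "fv (FConj \<phi> \<psi>) = fv \<phi> \<union> fv \<psi>"
| "fv (FEx x \<phi>) = fv \<phi> - {x}"

fun qfree :: "('f, 'r) fm \<Rightarrow> bool" where
  "qfree (FNeg \<phi>) = qfree \<phi>"
| "qfree (FConj \<phi> \<psi>) = (qfree \<phi> \<and> qfree \<psi>)"
| "qfree (FEx x \<phi>) = False"
| "qfree _ = True"

definition sentence :: "('f, 'r) fm \<Rightarrow> bool" where
  "sentence \<phi> \<longleftrightarrow> fv \<phi> = {}"

definition models :: "('a, 'f, 'r) struc \<Rightarrow> ('f, 'r) fm set \<Rightarrow> bool" where
  "models M T \<longleftrightarrow> is_struc M \<and> (\<forall>\<phi>\<in>T. \<forall>s. range s \<subseteq> sdom M \<longrightarrow> sat M s \<phi>)"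

text \<open>A complete theory: a consistent set of sentences deciding every sentence
(semantically, over structures with universe in the type \<open>'a\<close>).\<close>
definition complete_theory :: "'a itself \<Rightarrow> ('f, 'r) fm set \<Rightarrow> bool" where
  "complete_theory _ T \<longleftrightarrow> (\<forall>\<phi>\<in>T. sentence \<phi>) \<and>
     (\<exists>M :: ('a, 'f, 'r) struc. models M T) \<and>
     (\<forall>\<phi>. sentence \<phi> \<longrightarrow>
        (\<forall>M :: ('a, 'f, 'r) struc. models M T \<longrightarrow> (\<forall>s. range s \<subseteq> sdom M \<longrightarrow> sat M s \<phi>)) \<or>
        (\<forall>M :: ('a, 'f, 'r) struc. models M T \<longrightarrow> (\<forall>s. range s \<subseteq> sdom M \<longrightarrow> sat M s (FNeg \<phi>))))"

definition tup :: "('a, 'f, 'r) struc \<Rightarrow> 'a list \<Rightarrow> nat \<Rightarrow> 'a" where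
  "tup M xs n = (if n < length xs then xs ! n else (SOME a. a \<in> sdom M))"

definition partial_elementary :: "('a, 'f, 'r) struc \<Rightarrow> 'a set \<Rightarrow> ('a \<Rightarrow> 'a) \<Rightarrow> bool" where
  "partial_elementary M A f \<longleftrightarrow> A \<subseteq> sdom M \<and> f ` A \<subseteq> sdom M \<and>
     (\<forall>\<phi> s. range s \<subseteq> A \<longrightarrow> (sat M s \<phi> \<longleftrightarrow> sat M (f \<circ> s) \<phi>))"

definition automorphism :: "('a, 'f, 'r) struc \<Rightarrow> ('a \<Rightarrow> 'a) \<Rightarrow> bool" where
  "automorphism M g \<longleftrightarrow> bij_betw g (sdom M) (sdom M) \<and>
     (\<forall>f as. set as \<subseteq> sdom M \<longrightarrow> g (sfun M f as) = sfun M f (map g as)) \<and>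
     (\<forall>r as. set as \<subseteq> sdom M \<longrightarrow> (srel M r (map g as) \<longleftrightarrow> srel M r as))"

text \<open>A formula with parameters is a
pair \<open>(\<phi>, s)\<close> where \<open>s\<close> assigns the free variables other than \<open>x_0\<close> to elements of \<open>A\<close>.\<close>
definition saturated :: "('a, 'f, 'r) struc \<Rightarrow> 'k rel \<Rightarrow> bool" where
  "saturated M \<kappa> \<longleftrightarrow> (\<forall>A \<Sigma>. A \<subseteq> sdom M \<longrightarrow> (card_of A, \<kappa>) \<in> ordLess \<longrightarrow>
      \<Sigma> \<subseteq> {(\<phi>, s). \<forall>n\<in>fv \<phi> - {0}. s n \<in> A} \<longrightarrow>
      (\<forall>F \<subseteq> \<Sigma>. finite F \<longrightarrow> (\<exists>c\<in>sdom M. \<forall>(\<phi>, s)\<in>F. sat M (s(0 := c)) \<phi>)) \<longrightarrow>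
      (\<exists>c\<in>sdom M. \<forall>(\<phi>, s)\<in>\<Sigma>. sat M (s(0 := c)) \<phi>))"

definition strongly_homogeneous :: "('a, 'f, 'r) struc \<Rightarrow> 'k rel \<Rightarrow> bool" where
  "strongly_homogeneous M \<kappa> \<longleftrightarrow> (\<forall>A f. (card_of A, \<kappa>) \<in> ordLess \<longrightarrow> partial_elementary M A f \<longrightarrow>
      (\<exists>g. automorphism M g \<and> (\<forall>a\<in>A. g a = f a)))"

definition strong_limit :: "'k rel \<Rightarrow> bool" where
  "strong_limit \<kappa> \<longleftrightarrow> Card_order \<kappa> \<and> infinite (Field \<kappa>) \<and>
     (\<forall>A :: 'k set. (card_of A, \<kappa>) \<in> ordLess \<longrightarrow> (card_of (Pow A), \<kappa>) \<in> ordLess)"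

text \<open>\<open>|T|\<close> is taken to be \<open>|L| + \<aleph>\<^sub>0\<close>, the number of formulas.\<close>
definition monster_model :: "('a, 'f, 'r) struc \<Rightarrow> ('f, 'r) fm set \<Rightarrow> 'k rel \<Rightarrow> bool" where
  "monster_model M T \<kappa> \<longleftrightarrow> models M T \<and> strong_limit \<kappa> \<and>
     (card_of (UNIV :: ('f, 'r) fm set), \<kappa>) \<in> ordLess \<and>
     saturated M \<kappa> \<and> strongly_homogeneous M \<kappa>"

section \<open>Continuous formulas (continuous logic counterpart, {0,1}-valued, 0 = true)\<close>

datatype ('f, 'r) cfm =
    CEq "'f trm" "'f trm"
  | CRel 'r "'f trm list"
  | CConn "(nat \<Rightarrow> real) \<Rightarrow> real" "('f, 'r) cfm list"
  | CSup nat "('f, 'r) cfm"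
  | CInf nat "('f, 'r) cfm"

definition trunc :: "nat \<Rightarrow> (nat \<Rightarrow> real) \<Rightarrow> nat \<Rightarrow> real" where
  "trunc k x = (\<lambda>i. if i < k then x i else 0)"

text \<open>A \<open>k\<close>-ary connective: a continuous map \<open>[0,1]^k \<rightarrow> [0,1]\<close> (applied to the first \<open>k\<close> coordinates).\<close>
definition connective :: "nat \<Rightarrow> ((nat \<Rightarrow> real) \<Rightarrow> real) \<Rightarrow> bool" where
  "connective k u \<longleftrightarrow>
     (\<forall>x. (\<forall>i<k. x i \<in> {0..1}) \<longrightarrow> u (trunc k x) \<in> {0..1}) \<and>
     (\<forall>x. (\<forall>i<k. x i \<in> {0..1}) \<longrightarrow> (\<forall>e>0. \<exists>d>0. \<forall>y. (\<forall>i<k. y i \<in> {0..1}) \<longrightarrow>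
        (\<forall>i<k. \<bar>x i - y i\<bar> < d) \<longrightarrow> \<bar>u (trunc k x) - u (trunc k y)\<bar> < e))"

fun wf_cfm :: "('f, 'r) cfm \<Rightarrow> bool" where
  "wf_cfm (CEq t u) = True"
| "wf_cfm (CRel r ts) = True"
| "wf_cfm (CConn u ps) = (connective (length ps) u \<and> (\<forall>p\<in>set ps. wf_cfm p))"
| "wf_cfm (CSup x p) = wf_cfm p"
| "wf_cfm (CInf x p) = wf_cfm p"

fun cfv :: "('f, 'r) cfm \<Rightarrow> nat set" where
  "cfv (CEq t u) = tvars t \<union> tvars u"
| "cfv (CRel r ts) = (\<Union>t\<in>set ts. tvars t)"
| "cfv (CConn u ps) = (\<Union>p\<in>set ps. cfv p)"
| "cfv (CSup x p) = cfv p - {x}"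
| "cfv (CInf x p) = cfv p - {x}"

fun cval :: "('a, 'f, 'r) struc \<Rightarrow> (nat \<Rightarrow> 'a) \<Rightarrow> ('f, 'r) cfm \<Rightarrow> real" where
  "cval M s (CEq t u) = (if teval M s t = teval M s u then 0 else 1)"
| "cval M s (CRel r ts) = (if srel M r (map (teval M s) ts) then 0 else 1)"
| "cval M s (CConn u ps) =
     (let vs = map (cval M s) ps in u (\<lambda>i. if i < length vs then vs ! i else 0))"
| "cval M s (CSup x p) = (SUP a\<in>sdom M. cval M (s(x := a)) p)"
| "cval M s (CInf x p) = (INF a\<in>sdom M. cval M (s(x := a)) p)"

definition same_qftp :: "('i, 'g, 's) struc \<Rightarrow> 'i list \<Rightarrow> 'i list \<Rightarrow> bool" where
  "same_qftp I is js \<longleftrightarrow> length is = length js \<and>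
     (\<forall>\<phi>. qfree \<phi> \<and> fv \<phi> \<subseteq> {..<length is} \<longrightarrow> (sat I (tup I is) \<phi> \<longleftrightarrow> sat I (tup I js) \<phi>))"

definition same_tp :: "('a, 'f, 'r) struc \<Rightarrow> 'a list \<Rightarrow> 'a list \<Rightarrow> bool" where
  "same_tp M xs ys \<longleftrightarrow> length xs = length ys \<and>
     (\<forall>\<phi>. fv \<phi> \<subseteq> {..<length xs} \<longrightarrow> (sat M (tup M xs) \<phi> \<longleftrightarrow> sat M (tup M ys) \<phi>))"

definition same_ctp :: "('a, 'f, 'r) struc \<Rightarrow> 'a list \<Rightarrow> 'a list \<Rightarrow> bool" where
  "same_ctp M xs ys \<longleftrightarrow> length xs = length ys \<and>
     (\<forall>\<phi>. wf_cfm \<phi> \<and> cfv \<phi> \<subseteq> {..<length xs} \<longrightarrow> cval M (tup M xs) \<phi> = cval M (tup M ys) \<phi>)"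

text \<open>An \<open>I\<close>-indexed sequence of \<open>m\<close>-tuples; \<open>b_{\<bar>i\<bar>}\<close> is the concatenation.\<close>
definition indexed_seq :: "('a, 'f, 'r) struc \<Rightarrow> ('i, 'g, 's) struc \<Rightarrow> nat \<Rightarrow> ('i \<Rightarrow> 'a list) \<Rightarrow> bool" where
  "indexed_seq M I m a \<longleftrightarrow> (\<forall>i\<in>sdom I. length (a i) = m \<and> set (a i) \<subseteq> sdom M)"

definition sub :: "('i \<Rightarrow> 'a list) \<Rightarrow> 'i list \<Rightarrow> 'a list" where
  "sub a is = concat (map a is)"

definition indiscernible :: "('a, 'f, 'r) struc \<Rightarrow> ('i, 'g, 's) struc \<Rightarrow> ('i \<Rightarrow> 'a list) \<Rightarrow> bool" where
  "indiscernible M I b \<longleftrightarrow> (\<forall>is js. set is \<subseteq> sdom I \<and> set js \<subseteq> sdom I \<and> same_qftp I is js \<longrightarrow>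
      same_tp M (sub b is) (sub b js))"

definition cindiscernible :: "('a, 'f, 'r) struc \<Rightarrow> ('i, 'g, 's) struc \<Rightarrow> ('i \<Rightarrow> 'a list) \<Rightarrow> bool" where
  "cindiscernible M I b \<longleftrightarrow> (\<forall>is js. set is \<subseteq> sdom I \<and> set js \<subseteq> sdom I \<and> same_qftp I is js \<longrightarrow>
      same_ctp M (sub b is) (sub b js))"

definition locally_based :: "('a, 'f, 'r) struc \<Rightarrow> ('i, 'g, 's) struc \<Rightarrow> ('i \<Rightarrow> 'a list) \<Rightarrow> ('i \<Rightarrow> 'a list) \<Rightarrow> bool" where
  "locally_based M I b a \<longleftrightarrow> (\<forall>\<Delta> js. finite \<Delta> \<and> set js \<subseteq> sdom I \<longrightarrow>
     (\<exists>is. set is \<subseteq> sdom I \<and> same_qftp I is js \<and>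
        (\<forall>\<phi>\<in>\<Delta>. fv \<phi> \<subseteq> {..<length (sub b js)} \<longrightarrow>
           (sat M (tup M (sub b js)) \<phi> \<longleftrightarrow> sat M (tup M (sub a is)) \<phi>))))"

definition clocally_based :: "('a, 'f, 'r) struc \<Rightarrow> ('i, 'g, 's) struc \<Rightarrow> ('i \<Rightarrow> 'a list) \<Rightarrow> ('i \<Rightarrow> 'a list) \<Rightarrow> bool" where
  "clocally_based M I b a \<longleftrightarrow> (\<forall>\<Delta> js (e::real). finite \<Delta> \<and> (\<forall>\<phi>\<in>\<Delta>. wf_cfm \<phi>) \<and> set js \<subseteq> sdom I \<and> e > 0 \<longrightarrow>
     (\<exists>is. set is \<subseteq> sdom I \<and> same_qftp I is js \<and>
        (\<forall>\<phi>\<in>\<Delta>. cfv \<phi> \<subseteq> {..<length (sub b js)} \<longrightarrow>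
           \<bar>cval M (tup M (sub b js)) \<phi> - cval M (tup M (sub a is)) \<phi>\<bar> \<le> e)))"

definition modeling_property :: "('a, 'f, 'r) struc \<Rightarrow> ('i, 'g, 's) struc \<Rightarrow> bool" where
  "modeling_property M I \<longleftrightarrow> (\<forall>m a. indexed_seq M I m a \<longrightarrow>
     (\<exists>b. indexed_seq M I m b \<and> indiscernible M I b \<and> locally_based M I b a))"

definition cont_modeling_property :: "('a, 'f, 'r) struc \<Rightarrow> ('i, 'g, 's) struc \<Rightarrow> bool" where
  "cont_modeling_property M I \<longleftrightarrow> (\<forall>m a. indexed_seq M I m a \<longrightarrow>
     (\<exists>b. indexed_seq M I m b \<and> cindiscernible M I b \<and> clocally_based M I b a))"

end

theory Submission
  imports Defs
begin

text \<open>
  A classical formula \<open>\<phi>\<close> is the \<open>{0,1}\<close>-valued continuous formula \<open>cfm_of_fm \<phi>\<close>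
  (negation \<open>1 - x\<close>, conjunction \<open>max\<close>, \<open>\<exists>\<close> as \<open>inf\<close>), so agreement of continuous values
  implies agreement of classical truth values. Conversely, in a \<open>{0,1}\<close>-valued structure every
  continuous formula takes only finitely many values, and each of its level sets is defined by
  a classical formula: a connective acts on finitely many tuples of values, and a sup or inf of
  finitely many values is a max or min, hence attained. So classical types determine continuous
  values exactly, and indiscernibility as well as local basedness transfer in both directions,
  the tolerance \<open>\<epsilon>\<close> playing no role.
\<close>

definition assignments :: "('a, 'f, 'r) struc \<Rightarrow> (nat \<Rightarrow> 'a) set" where
  "assignments M = {s. range s \<subseteq> sdom M}"

lemma assignments_upd: "s \<in> assignments M \<Longrightarrow> a \<in> sdom M \<Longrightarrow> s(x := a) \<in> assignments M"
  unfolding assignments_def by auto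

lemma sdom_nonempty_if_assignment: "s \<in> assignments M \<Longrightarrow> sdom M \<noteq> {}"
  unfolding assignments_def by auto

lemma tup_in_assignments: "sdom M \<noteq> {} \<Longrightarrow> set xs \<subseteq> sdom M \<Longrightarrow> tup M xs \<in> assignments M"
  unfolding assignments_def tup_def by (auto intro: someI_ex)

lemma cSup_finite_eq_iff:
  fixes V :: "'a::conditionally_complete_linorder set"
  shows "finite V \<Longrightarrow> V \<noteq> {} \<Longrightarrow> Sup V = v \<longleftrightarrow> v \<in> V \<and> (\<forall>w\<in>V. \<not> v < w)"
  by (auto simp: cSup_eq_Max Max_eq_iff not_less)

lemma cInf_finite_eq_iff:
  fixes V :: "'a::conditionally_complete_linorder set"
  shows "finite V \<Longrightarrow> V \<noteq> {} \<Longrightarrow> Inf V = v \<longleftrightarrow> v \<in> V \<and> (\<forall>w\<in>V. \<not> w < v)"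
  by (auto simp: cInf_eq_Min Min_eq_iff not_less)

lemma connective_if_lipschitz:
  assumes range: "\<And>x. \<forall>i<k. x i \<in> {0..1} \<Longrightarrow> u (trunc k x) \<in> {0..1}"
    and lipschitz: "\<And>x y. \<bar>u (trunc k x) - u (trunc k y)\<bar> \<le> (\<Sum>i<k. \<bar>x i - y i\<bar>)"
  shows "connective k u"
  unfolding connective_def
proof (intro conjI allI impI range)
  fix x :: "nat \<Rightarrow> real" and e :: real
  assume "e > 0"
  show "\<exists>d>0. \<forall>y. (\<forall>i<k. y i \<in> {0..1}) \<longrightarrow> (\<forall>i<k. \<bar>x i - y i\<bar> < d) \<longrightarrow>
      \<bar>u (trunc k x) - u (trunc k y)\<bar> < e"
  proof (intro exI[of _ "e / (k + 1)"] conjI allI impI)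
    fix y :: "nat \<Rightarrow> real"
    assume "\<forall>i<k. \<bar>x i - y i\<bar> < e / (k + 1)"
    then have "(\<Sum>i<k. \<bar>x i - y i\<bar>) \<le> of_nat (card {..<k}) * (e / (k + 1))"
      by (intro sum_bounded_above) (simp add: less_imp_le)
    also have "\<dots> < e"
      using \<open>e > 0\<close> by (simp add: field_simps)
    finally show "\<bar>u (trunc k x) - u (trunc k y)\<bar> < e"
      using lipschitz[of x y] by linarith
  qed (use \<open>e > 0\<close> in simp)
qed auto

fun cfm_of_fm :: "('f, 'r) fm \<Rightarrow> ('f, 'r) cfm" where
  "cfm_of_fm FBot = CConn (\<lambda>x. 1) []"
| "cfm_of_fm (FEq t u) = CEq t u"
| "cfm_of_fm (FRel r ts) = CRel r ts"
| "cfm_of_fm (FNeg \<phi>) = CConn (\<lambda>x. 1 - x 0) [cfm_of_fm \<phi>]"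
| "cfm_of_fm (FConj \<phi> \<psi>) = CConn (\<lambda>x. max (x 0) (x 1)) [cfm_of_fm \<phi>, cfm_of_fm \<psi>]"
| "cfm_of_fm (FEx x \<phi>) = CInf x (cfm_of_fm \<phi>)"

lemma cfv_cfm_of_fm: "cfv (cfm_of_fm \<phi>) = fv \<phi>"
  by (induction \<phi>) auto

lemma wf_cfm_of_fm: "wf_cfm (cfm_of_fm \<phi>)"
proof (induction \<phi>)
  case FBot
  show ?case by (simp add: connective_def)
next
  case (FNeg \<phi>)
  have "connective 1 (\<lambda>x. 1 - x 0)"
    by (rule connective_if_lipschitz) (auto simp: trunc_def)
  with FNeg show ?case by simp
next
  case (FConj \<phi> \<psi>)
  have "connective 2 (\<lambda>x. max (x 0) (x 1))"
    by (rule connective_if_lipschitz) (auto simp: trunc_def numeral_2_eq_2 max_def abs_if)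
  with FConj show ?case by (simp add: numeral_2_eq_2)
qed simp_all

lemma cval_cfm_of_fm:
  "s \<in> assignments M \<Longrightarrow> cval M s (cfm_of_fm \<phi>) = (if sat M s \<phi> then 0 else 1)"
proof (induction \<phi> arbitrary: s)
  case (FEx x \<phi>)
  let ?V = "(\<lambda>a. if sat M (s(x := a)) \<phi> then 0 else 1 :: real) ` sdom M"
  have "?V \<subseteq> {0, 1}"
    by auto
  then have fin: "finite ?V"
    by (rule finite_subset) simp
  have ne: "?V \<noteq> {}"
    using sdom_nonempty_if_assignment[OF FEx.prems] by blast
  have "cval M (s(x := a)) (cfm_of_fm \<phi>) = (if sat M (s(x := a)) \<phi> then 0 else 1)"
    if "a \<in> sdom M" for a
    using FEx.IH[OF assignments_upd[OF FEx.prems that]] .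
  then have "(\<lambda>a. cval M (s(x := a)) (cfm_of_fm \<phi>)) ` sdom M = ?V"
    by (intro image_cong) simp_all
  then have "cval M s (cfm_of_fm (FEx x \<phi>)) = Inf ?V"
    by simp
  also have "\<dots> = (if sat M s (FEx x \<phi>) then 0 else 1)"
    using sdom_nonempty_if_assignment[OF FEx.prems]
    by (subst cInf_finite_eq_iff[OF fin ne]) auto
  finally show ?case .
qed (auto simp: max_def)

definition disj_list :: "('f, 'r) fm list \<Rightarrow> ('f, 'r) fm" where
  "disj_list l = foldr (\<lambda>\<phi> \<psi>. FNeg (FConj (FNeg \<phi>) (FNeg \<psi>))) l FBot"

definition disj_set :: "('f, 'r) fm set \<Rightarrow> ('f, 'r) fm" where
  "disj_set S = disj_list (SOME l. set l = S)"

lemma sat_disj_list: "sat M s (disj_list l) \<longleftrightarrow> (\<exists>\<phi>\<in>set l. sat M s \<phi>)"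
  unfolding disj_list_def by (induction l) auto

lemma fv_disj_list: "fv (disj_list l) = (\<Union>\<phi>\<in>set l. fv \<phi>)"
  unfolding disj_list_def by (induction l) auto

lemma
  assumes "finite S"
  shows sat_disj_set: "sat M s (disj_set S) \<longleftrightarrow> (\<exists>\<phi>\<in>S. sat M s \<phi>)"
    and fv_disj_set: "fv (disj_set S) = (\<Union>\<phi>\<in>S. fv \<phi>)"
proof -
  have "set (SOME l. set l = S) = S"
    using someI_ex[OF finite_list[OF assms]] .
  then show "sat M s (disj_set S) \<longleftrightarrow> (\<exists>\<phi>\<in>S. sat M s \<phi>)" "fv (disj_set S) = (\<Union>\<phi>\<in>S. fv \<phi>)"
    unfolding disj_set_def by (simp_all add: sat_disj_list fv_disj_list)
qed

definition finitely_definable ::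
    "('a, 'f, 'r) struc \<Rightarrow> nat set \<Rightarrow> ((nat \<Rightarrow> 'a) \<Rightarrow> 'v) \<Rightarrow> bool" where
  "finitely_definable M X f \<longleftrightarrow> finite (f ` assignments M) \<and>
     (\<exists>\<psi>. \<forall>v. fv (\<psi> v) \<subseteq> X \<and> (\<forall>s\<in>assignments M. sat M s (\<psi> v) \<longleftrightarrow> f s = v))"

lemma finitely_definable_sat:
  assumes "fv \<phi> \<subseteq> X"
  shows "finitely_definable M X (\<lambda>s. sat M s \<phi>)"
  unfolding finitely_definable_def
  using assms by (intro conjI exI[of _ "\<lambda>b. if b then \<phi> else FNeg \<phi>"]) auto

lemma finitely_definable_comp:
  assumes "finitely_definable M X f"
  shows "finitely_definable M X (\<lambda>s. g (f s))"
proof -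
  define V where "V = f ` assignments M"
  obtain \<psi> where fv_\<psi>: "\<And>v. fv (\<psi> v) \<subseteq> X"
    and sat_\<psi>: "\<And>v s. s \<in> assignments M \<Longrightarrow> sat M s (\<psi> v) \<longleftrightarrow> f s = v"
    using assms unfolding finitely_definable_def by blast
  have fin: "finite V"
    using assms unfolding finitely_definable_def V_def by blast
  define \<theta> where "\<theta> w = disj_set (\<psi> ` {v \<in> V. g v = w})" for w
  have "fv (\<theta> w) \<subseteq> X" for w
    unfolding \<theta>_def using fin fv_\<psi> by (auto simp: fv_disj_set)
  moreover have "sat M s (\<theta> w) \<longleftrightarrow> g (f s) = w" if "s \<in> assignments M" for w s
    unfolding \<theta>_def using fin that by (auto simp: sat_disj_set sat_\<psi> V_def)
  moreover have "finite ((\<lambda>s. g (f s)) ` assignments M)"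
    using finite_imageI[OF fin, of g] by (simp add: image_image V_def)
  ultimately show ?thesis
    unfolding finitely_definable_def by blast
qed

lemma finitely_definable_map:
  assumes "\<And>p. p \<in> set ps \<Longrightarrow> finitely_definable M X (F p)"
  shows "finitely_definable M X (\<lambda>s. map (\<lambda>p. F p s) ps)"
  using assms
proof (induction ps)
  case Nil
  have "finite ((\<lambda>s. map (\<lambda>p. F p s) []) ` assignments M)"
    by (rule finite_subset[of _ "{[]}"]) auto
  then show ?case
    unfolding finitely_definable_def
    by (intro conjI exI[of _ "\<lambda>vs. if vs = [] then FNeg FBot else FBot"]) auto
next
  case (Cons p ps)
  let ?G = "\<lambda>s. map (\<lambda>p. F p s) ps"
  have hd: "finitely_definable M X (F p)" and tl: "finitely_definable M X ?G"
    using Cons by simp_all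
  obtain \<psi> where fv_\<psi>: "\<And>v. fv (\<psi> v) \<subseteq> X"
    and sat_\<psi>: "\<And>v s. s \<in> assignments M \<Longrightarrow> sat M s (\<psi> v) \<longleftrightarrow> F p s = v"
    using hd unfolding finitely_definable_def by blast
  obtain \<Psi> where fv_\<Psi>: "\<And>vs. fv (\<Psi> vs) \<subseteq> X"
    and sat_\<Psi>: "\<And>vs s. s \<in> assignments M \<Longrightarrow> sat M s (\<Psi> vs) \<longleftrightarrow> ?G s = vs"
    using tl unfolding finitely_definable_def by blast
  define \<theta> where "\<theta> vs = (case vs of [] \<Rightarrow> FBot | v # vs' \<Rightarrow> FConj (\<psi> v) (\<Psi> vs'))" for vs
  have "(\<lambda>s. F p s # ?G s) ` assignments M \<subseteq>
      (\<lambda>(v, vs). v # vs) ` (F p ` assignments M \<times> ?G ` assignments M)"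
    by auto
  moreover have "finite (F p ` assignments M \<times> ?G ` assignments M)"
    using hd tl unfolding finitely_definable_def by blast
  ultimately have "finite ((\<lambda>s. F p s # ?G s) ` assignments M)"
    using finite_subset by blast
  moreover have "fv (\<theta> vs) \<subseteq> X" for vs
    using fv_\<psi> fv_\<Psi> by (cases vs) (auto simp: \<theta>_def)
  moreover have "sat M s (\<theta> vs) \<longleftrightarrow> F p s # ?G s = vs" if "s \<in> assignments M" for vs s
    using that by (cases vs) (auto simp: \<theta>_def sat_\<psi> sat_\<Psi>)
  ultimately show ?case
    unfolding finitely_definable_def list.map by blast
qed

lemma finitely_definable_extremum:
  fixes Q :: "'v set \<Rightarrow> 'v"
  assumes f: "finitely_definable M (insert x X) f"
    and Q: "\<And>V v. finite V \<Longrightarrow> V \<noteq> {} \<Longrightarrow> Q V = v \<longleftrightarrow> v \<in> V \<and> (\<forall>w\<in>V. \<not> R v w)"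
  shows "finitely_definable M X (\<lambda>s. Q ((\<lambda>a. f (s(x := a))) ` sdom M))"
proof -
  define V where "V = f ` assignments M"
  define V\<^sub>s where "V\<^sub>s s = (\<lambda>a. f (s(x := a))) ` sdom M" for s
  obtain \<psi> where fv_\<psi>: "\<And>v. fv (\<psi> v) \<subseteq> insert x X"
    and sat_\<psi>: "\<And>v s. s \<in> assignments M \<Longrightarrow> sat M s (\<psi> v) \<longleftrightarrow> f s = v"
    using f unfolding finitely_definable_def by blast
  have fin: "finite V"
    using f unfolding finitely_definable_def V_def by blast
  have V\<^sub>s: "V\<^sub>s s \<subseteq> V" "finite (V\<^sub>s s)" "V\<^sub>s s \<noteq> {}" if s: "s \<in> assignments M" for s
  proof -
    show "V\<^sub>s s \<subseteq> V"
      using s by (auto simp: V\<^sub>s_def V_def assignments_upd)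
    then show "finite (V\<^sub>s s)"
      using fin by (rule finite_subset)
    show "V\<^sub>s s \<noteq> {}"
      using sdom_nonempty_if_assignment[OF s] by (simp add: V\<^sub>s_def)
  qed
  have Q_in: "Q (V\<^sub>s s) \<in> V\<^sub>s s" if "s \<in> assignments M" for s
    using Q[OF V\<^sub>s(2,3)[OF that]] by blast
  \<comment> \<open>The extremum is the value that is attained and not beaten by any other value.\<close>
  define \<theta> where "\<theta> v = FConj (FEx x (\<psi> v)) (FNeg (FEx x (disj_set (\<psi> ` {w \<in> V. R v w}))))" for v
  have "(\<lambda>s. Q (V\<^sub>s s)) ` assignments M \<subseteq> V"
    using Q_in V\<^sub>s(1) by blast
  then have "finite ((\<lambda>s. Q (V\<^sub>s s)) ` assignments M)"
    using fin finite_subset by blast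
  moreover have "fv (\<theta> v) \<subseteq> X" for v
    using fin fv_\<psi> by (auto simp: \<theta>_def fv_disj_set)
  moreover have "sat M s (\<theta> v) \<longleftrightarrow> Q (V\<^sub>s s) = v" if s: "s \<in> assignments M" for v s
  proof -
    have "sat M s (\<theta> v) \<longleftrightarrow> v \<in> V\<^sub>s s \<and> (\<forall>w\<in>V\<^sub>s s. \<not> R v w)"
      using fin s V\<^sub>s(1)[OF s]
      by (auto simp: \<theta>_def V\<^sub>s_def sat_disj_set sat_\<psi> assignments_upd)
    also have "\<dots> \<longleftrightarrow> Q (V\<^sub>s s) = v"
      using Q[OF V\<^sub>s(2,3)[OF s]] by blast
    finally show ?thesis .
  qed
  ultimately show ?thesis
    unfolding finitely_definable_def V\<^sub>s_def by blast
qed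

lemma finitely_definable_cval:
  "cfv p \<subseteq> X \<Longrightarrow> finitely_definable M X (\<lambda>s. cval M s p)"
proof (induction p arbitrary: X)
  case (CEq t u)
  then show ?case
    using finitely_definable_comp[OF finitely_definable_sat[of "FEq t u"],
        of X M "\<lambda>b. if b then 0 else 1 :: real"]
    by simp
next
  case (CRel r ts)
  then show ?case
    using finitely_definable_comp[OF finitely_definable_sat[of "FRel r ts"],
        of X M "\<lambda>b. if b then 0 else 1 :: real"]
    by simp
next
  case (CConn u ps)
  then have cval_list: "finitely_definable M X (\<lambda>s. map (\<lambda>p. cval M s p) ps)"
    by (intro finitely_definable_map) auto
  show ?case
    using finitely_definable_comp[OF cval_list,
        of "\<lambda>vs. u (\<lambda>i. if i < length vs then vs ! i else 0)"]
    by simp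
next
  case (CSup x p)
  have "finitely_definable M (insert x X) (\<lambda>s. cval M s p)"
    by (rule CSup.IH) (use CSup.prems in auto)
  from finitely_definable_extremum[OF this cSup_finite_eq_iff] show ?case
    by simp
next
  case (CInf x p)
  have "finitely_definable M (insert x X) (\<lambda>s. cval M s p)"
    by (rule CInf.IH) (use CInf.prems in auto)
  from finitely_definable_extremum[OF this cInf_finite_eq_iff] show ?case
    by simp
qed

definition level_fm :: "('a, 'f, 'r) struc \<Rightarrow> ('f, 'r) cfm \<Rightarrow> real \<Rightarrow> ('f, 'r) fm" where
  "level_fm M p = (SOME \<psi>. \<forall>v. fv (\<psi> v) \<subseteq> cfv p \<and>
     (\<forall>s\<in>assignments M. sat M s (\<psi> v) \<longleftrightarrow> cval M s p = v))"

lemma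
  shows fv_level_fm: "fv (level_fm M p v) \<subseteq> cfv p"
    and sat_level_fm: "s \<in> assignments M \<Longrightarrow> sat M s (level_fm M p v) \<longleftrightarrow> cval M s p = v"
proof -
  have "\<exists>\<psi>. \<forall>v. fv (\<psi> v) \<subseteq> cfv p \<and> (\<forall>s\<in>assignments M. sat M s (\<psi> v) \<longleftrightarrow> cval M s p = v)"
    using finitely_definable_cval[of p "cfv p" M] unfolding finitely_definable_def by blast
  from someI_ex[OF this]
  show "fv (level_fm M p v) \<subseteq> cfv p"
    and "s \<in> assignments M \<Longrightarrow> sat M s (level_fm M p v) \<longleftrightarrow> cval M s p = v"
    unfolding level_fm_def by blast+
qed

lemma sat_agree_iff_cval_agree:
  fixes M :: "('a, 'f, 'r) struc"
  assumes s: "s \<in> assignments M" and t: "t \<in> assignments M"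
  shows "(\<forall>\<phi>. fv \<phi> \<subseteq> X \<longrightarrow> (sat M s \<phi> \<longleftrightarrow> sat M t \<phi>)) \<longleftrightarrow>
    (\<forall>p. wf_cfm p \<and> cfv p \<subseteq> X \<longrightarrow> cval M s p = cval M t p)"
proof (rule iffI; intro allI impI)
  fix p :: "('f, 'r) cfm"
  assume sat_agree: "\<forall>\<phi>. fv \<phi> \<subseteq> X \<longrightarrow> (sat M s \<phi> \<longleftrightarrow> sat M t \<phi>)"
    and "wf_cfm p \<and> cfv p \<subseteq> X"
  then have "sat M t (level_fm M p (cval M s p))"
    using fv_level_fm sat_level_fm[OF s] by blast
  then show "cval M s p = cval M t p"
    using sat_level_fm[OF t] by simp
next
  fix \<phi> :: "('f, 'r) fm"
  assume "\<forall>p. wf_cfm p \<and> cfv p \<subseteq> X \<longrightarrow> cval M s p = cval M t p" and "fv \<phi> \<subseteq> X"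
  then have "cval M s (cfm_of_fm \<phi>) = cval M t (cfm_of_fm \<phi>)"
    by (simp add: wf_cfm_of_fm cfv_cfm_of_fm)
  then show "sat M s \<phi> \<longleftrightarrow> sat M t \<phi>"
    by (simp add: cval_cfm_of_fm[OF s] cval_cfm_of_fm[OF t] split: if_splits)
qed

lemma same_ctp_iff_same_tp:
  assumes "sdom M \<noteq> {}" "set xs \<subseteq> sdom M" "set ys \<subseteq> sdom M"
  shows "same_ctp M xs ys \<longleftrightarrow> same_tp M xs ys"
proof -
  have "tup M xs \<in> assignments M" "tup M ys \<in> assignments M"
    using assms by (simp_all add: tup_in_assignments)
  from sat_agree_iff_cval_agree[OF this, of "{..<length xs}"] show ?thesis
    unfolding same_ctp_def same_tp_def by blast
qed

lemma set_sub_subset: "indexed_seq M I m a \<Longrightarrow> set is \<subseteq> sdom I \<Longrightarrow> set (sub a is) \<subseteq> sdom M"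
  unfolding indexed_seq_def sub_def by auto

lemma cindiscernible_iff_indiscernible:
  assumes "sdom M \<noteq> {}" "indexed_seq M I m b"
  shows "cindiscernible M I b \<longleftrightarrow> indiscernible M I b"
  unfolding cindiscernible_def indiscernible_def
  using assms by (simp add: same_ctp_iff_same_tp set_sub_subset)

lemma clocally_based_imp_locally_based:
  fixes M :: "('a, 'f, 'r) struc"
  assumes ne: "sdom M \<noteq> {}" and b: "indexed_seq M I m b" and a: "indexed_seq M I m a"
    and based: "clocally_based M I b a"
  shows "locally_based M I b a"
  unfolding locally_based_def
proof (intro allI impI)
  fix \<Delta> :: "('f, 'r) fm set" and js
  assume \<Delta>: "finite \<Delta> \<and> set js \<subseteq> sdom I"
  let ?s = "tup M (sub b js)"
  \<comment> \<open>Any tolerance below 1 separates the values 0 and 1 of a classical formula.\<close>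
  have "finite (cfm_of_fm ` \<Delta>) \<and> (\<forall>\<phi>\<in>cfm_of_fm ` \<Delta>. wf_cfm \<phi>) \<and>
      set js \<subseteq> sdom I \<and> (1 / 2 :: real) > 0"
    using \<Delta> by (simp add: wf_cfm_of_fm)
  from based[unfolded clocally_based_def, rule_format, OF this]
  obtain "is" where "is": "set is \<subseteq> sdom I" "same_qftp I is js"
    and close: "\<And>\<phi>. \<phi> \<in> cfm_of_fm ` \<Delta> \<Longrightarrow> cfv \<phi> \<subseteq> {..<length (sub b js)} \<Longrightarrow>
      \<bar>cval M ?s \<phi> - cval M (tup M (sub a is)) \<phi>\<bar> \<le> 1 / 2"
    by blast
  let ?t = "tup M (sub a is)"
  have s: "?s \<in> assignments M" and t: "?t \<in> assignments M"
    using \<Delta> "is"(1)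
    by (simp_all add: tup_in_assignments ne set_sub_subset[OF b] set_sub_subset[OF a])
  have "sat M ?s \<phi> \<longleftrightarrow> sat M ?t \<phi>" if "\<phi> \<in> \<Delta>" "fv \<phi> \<subseteq> {..<length (sub b js)}" for \<phi>
    using close[of "cfm_of_fm \<phi>"] that
    by (auto simp: cfv_cfm_of_fm cval_cfm_of_fm[OF s] cval_cfm_of_fm[OF t] split: if_splits)
  with "is" show "\<exists>is. set is \<subseteq> sdom I \<and> same_qftp I is js \<and>
      (\<forall>\<phi>\<in>\<Delta>. fv \<phi> \<subseteq> {..<length (sub b js)} \<longrightarrow> (sat M ?s \<phi> \<longleftrightarrow> sat M (tup M (sub a is)) \<phi>))"
    by blast
qed

lemma locally_based_imp_clocally_based:
  fixes M :: "('a, 'f, 'r) struc"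
  assumes ne: "sdom M \<noteq> {}" and b: "indexed_seq M I m b" and a: "indexed_seq M I m a"
    and based: "locally_based M I b a"
  shows "clocally_based M I b a"
  unfolding clocally_based_def
proof (intro allI impI)
  fix \<Delta> :: "('f, 'r) cfm set" and js and e :: real
  assume \<Delta>: "finite \<Delta> \<and> (\<forall>\<phi>\<in>\<Delta>. wf_cfm \<phi>) \<and> set js \<subseteq> sdom I \<and> e > 0"
  let ?s = "tup M (sub b js)"
  define level where "level p = level_fm M p (cval M ?s p)" for p
  have "finite (level ` \<Delta>) \<and> set js \<subseteq> sdom I"
    using \<Delta> by simp
  from based[unfolded locally_based_def, rule_format, OF this]
  obtain "is" where "is": "set is \<subseteq> sdom I" "same_qftp I is js"
    and agree: "\<And>\<psi>. \<psi> \<in> level ` \<Delta> \<Longrightarrow> fv \<psi> \<subseteq> {..<length (sub b js)} \<Longrightarrow>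
      sat M ?s \<psi> \<longleftrightarrow> sat M (tup M (sub a is)) \<psi>"
    by blast
  let ?t = "tup M (sub a is)"
  have s: "?s \<in> assignments M" and t: "?t \<in> assignments M"
    using \<Delta> "is"(1)
    by (simp_all add: tup_in_assignments ne set_sub_subset[OF b] set_sub_subset[OF a])
  have "cval M ?s p = cval M ?t p" if "p \<in> \<Delta>" "cfv p \<subseteq> {..<length (sub b js)}" for p
  proof -
    have "sat M ?s (level p)"
      using sat_level_fm[OF s] by (simp add: level_def)
    then have "sat M ?t (level p)"
      using agree[of "level p"] that fv_level_fm[of M p] by (auto simp: level_def)
    then show ?thesis
      using sat_level_fm[OF t] by (simp add: level_def)
  qed
  with "is" \<Delta> show "\<exists>is. set is \<subseteq> sdom I \<and> same_qftp I is js \<and>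
      (\<forall>\<phi>\<in>\<Delta>. cfv \<phi> \<subseteq> {..<length (sub b js)} \<longrightarrow>
        \<bar>cval M ?s \<phi> - cval M (tup M (sub a is)) \<phi>\<bar> \<le> e)"
    by auto
qed

lemma cont_modeling_property_iff_modeling_property:
  assumes "sdom M \<noteq> {}"
  shows "cont_modeling_property M I \<longleftrightarrow> modeling_property M I"
  unfolding cont_modeling_property_def modeling_property_def
  using assms cindiscernible_iff_indiscernible
    clocally_based_imp_locally_based locally_based_imp_clocally_based
  by meson

theorem proposition3p5:
  fixes T :: "('f, 'r) fm set" and C :: "('a, 'f, 'r) struc" and \<kappa> :: "'k rel"
    and I :: "('i, 'g, 's) struc"
  assumes "complete_theory TYPE('a) T"
    and "monster_model C T \<kappa>"
    and "is_struc I"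
  shows "cont_modeling_property C I \<longleftrightarrow> modeling_property C I"
proof -
  have "sdom C \<noteq> {}"
    using assms(2) unfolding monster_model_def models_def is_struc_def by blast
  then show ?thesis
    by (rule cont_modeling_property_iff_modeling_property)
qed

end
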